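(* For every integer $k\ge 0$, every integer $m\ge 2$ and every integer $i$ with $1\le i\le m-1$, $$\tilde d_{i,k}^2(m)\bigl(\tilde d_{i,k}^2(m)-\tilde d_{i-1,k}(m)\tilde d_{i+1,k}(m)\bigr)>\tilde d_{i-1,k}^2(m)\bigl(\tilde d_{i+1,k}^2(m)-\tilde d_{i,k}(m)\tilde d_{i+2,k}(m)\bigr).$$
   Context: For integers $m\ge 0$ and $0\le i\le m$, the Boros–Moll numbers are $$d_i(m)=2^{-2m}\sum_{j=i}^{m}2^j\binom{2m-2j}{m-j}\binom{m+j}{j}\binom{j}{i},$$ with the convention $d_i(m)=0$ for $i>m$. For an integer $k\ge 0$ the normalized Boros–Moll numbers are $\tilde d_{i,k}(m)=d_i(m)/(i+k)!$ for $i\ge 0$ (so $\tilde d_{i,k}(m)=0$ for $i>m$). *)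

theory Defs
  imports Complex_Main
begin

definition boros_moll :: "nat \<Rightarrow> nat \<Rightarrow> real" where
  "boros_moll i m = (if i \<le> m then
     (1 / 2 ^ (2 * m)) * (\<Sum>j = i..m. 2 ^ j * real ((2*m - 2*j) choose (m - j))
        * real ((m + j) choose j) * real (j choose i))
   else 0)"

definition boros_moll_norm :: "nat \<Rightarrow> nat \<Rightarrow> nat \<Rightarrow> real" where
  "boros_moll_norm i k m = boros_moll i m / fact (i + k)"

end

theory Submission
  imports Defs
begin

text \<open>For fixed m the numbers d_i(m) satisfy a three-term recurrence in i, found by creative
  telescoping from their defining sum. Clearing the factorials and eliminating d_{i-1}(m) and
  d_{i+2}(m) with the recurrence turns the inequality into positivity of a homogeneous quartic form
  in d_i(m) and d_{i+1}(m). Descending induction from i = m + 1 along the recurrence confines the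
  ratio (i + 1) d_{i+1}(m) / d_i(m) to an explicit interval, and on that interval the quartic has a
  Bernstein expansion whose coefficients are polynomials with nonnegative coefficients in
  a = i - 1, p = m - i - 1 and k.\<close>

definition boros_moll_weight :: "nat \<Rightarrow> nat \<Rightarrow> real" where
  "boros_moll_weight m j = 2 ^ j * real ((2*m - 2*j) choose (m - j)) * real ((m + j) choose j)"

lemma boros_moll_eq_weighted_sum:
  "boros_moll i m = (1 / 2 ^ (2*m)) * (\<Sum>j = 0..m. boros_moll_weight m j * real (j choose i))"
proof (cases "i \<le> m")
  case True
  have "(\<Sum>j = i..m. boros_moll_weight m j * real (j choose i))
      = (\<Sum>j = 0..m. boros_moll_weight m j * real (j choose i))"
    by (rule sum.mono_neutral_left) auto
  with True show ?thesis by (simp add: boros_moll_def boros_moll_weight_def mult.assoc)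
next
  case False
  then have "(\<Sum>j = 0..m. boros_moll_weight m j * real (j choose i)) = 0"
    by (intro sum.neutral) auto
  with False show ?thesis by (simp add: boros_moll_def)
qed

lemma boros_moll_weight_nonneg: "0 \<le> boros_moll_weight m j"
  unfolding boros_moll_weight_def by simp

lemma boros_moll_nonneg: "0 \<le> boros_moll i m"
  unfolding boros_moll_eq_weighted_sum
  by (intro mult_nonneg_nonneg sum_nonneg) (auto simp: boros_moll_weight_nonneg)

lemma boros_moll_pos: "i \<le> m \<Longrightarrow> 0 < boros_moll i m"
proof -
  assume "i \<le> m"
  then have "0 < boros_moll_weight m m * real (m choose i)"
    unfolding boros_moll_weight_def by simp
  also have "\<dots> \<le> (\<Sum>j = 0..m. boros_moll_weight m j * real (j choose i))"
    by (rule member_le_sum) (auto simp: boros_moll_weight_nonneg)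
  finally show ?thesis unfolding boros_moll_eq_weighted_sum by simp
qed

lemma boros_moll_eq_0: "m < i \<Longrightarrow> boros_moll i m = 0"
  unfolding boros_moll_def by simp

lemma Suc_times_binomial_real:
  "real (Suc k) * real (n choose Suc k) = (real n - real k) * real (n choose k)"
proof (cases "k \<le> n")
  case True
  have "Suc k * (n choose Suc k) = (n - k) * (n choose k)"
    using binomial_absorption[of k n] binomial_absorb_comp[of n k] by simp
  then show ?thesis
    using True by (metis of_nat_diff of_nat_mult)
next
  case False
  then show ?thesis by (simp add: binomial_eq_0)
qed

lemma Suc_times_central_binomial:
  "Suc k * (2 * Suc k choose Suc k) = 2 * (2 * k + 1) * (2 * k choose k)"
proof -
  have "Suc k * (2 * Suc k choose Suc k) = 2 * (Suc k * (Suc (2 * k) choose k))"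
    using Suc_times_binomial[of k "Suc (2 * k)"] by simp
  also have "Suc (2 * k) choose k = Suc (2 * k) choose Suc k"
    using binomial_symmetric[of k "Suc (2 * k)"] by simp
  also have "Suc k * (Suc (2 * k) choose Suc k) = (2 * k + 1) * (2 * k choose k)"
    using Suc_times_binomial[of k "2 * k"] by simp
  finally show ?thesis by simp
qed

lemma boros_moll_weight_Suc:
  assumes "j < m"
  shows "real (Suc j) * (2 * real m - 2 * real j - 1) * boros_moll_weight m (Suc j)
       = (real m - real j) * (real m + real j + 1) * boros_moll_weight m j"
proof -
  obtain n where n: "m - j = Suc n" using assms by (metis Suc_diff_Suc)
  define A where "A = real (2 * n choose n)"
  define B where "B = real (2 * Suc n choose Suc n)"
  define U where "U = real ((m + Suc j) choose Suc j)"
  define V where "V = real ((m + j) choose j)"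
  have mj: "real m - real j = real n + 1" using assms n by (simp add: of_nat_diff)
  have central: "(real n + 1) * B = 2 * (2 * real n + 1) * A"
    using arg_cong[OF Suc_times_central_binomial[of n], of real] unfolding A_def B_def
    by (simp del: binomial_Suc_Suc add: algebra_simps)
  have upper: "real (Suc j) * U = (real m + real j + 1) * V"
    using arg_cong[OF Suc_times_binomial[of j "m + j"], of real] unfolding U_def V_def
    by (simp del: binomial_Suc_Suc add: algebra_simps)
  have "2 * m - 2 * Suc j = 2 * n" "m - Suc j = n" "2 * m - 2 * j = 2 * Suc n"
    using n by auto
  then have w: "boros_moll_weight m (Suc j) = 2 * 2 ^ j * A * U" "boros_moll_weight m j = 2 ^ j * B * V"
    unfolding boros_moll_weight_def A_def B_def U_def V_def n by simp_all
  have "2 * real m - 2 * real j - 1 = 2 * real n + 1" using mj by simp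
  then have "real (Suc j) * (2 * real m - 2 * real j - 1) * boros_moll_weight m (Suc j)
      = 2 ^ j * (2 * (2 * real n + 1) * A) * (real (Suc j) * U)"
    unfolding w by (simp only: ac_simps)
  also have "\<dots> = 2 ^ j * ((real n + 1) * B) * ((real m + real j + 1) * V)"
    unfolding central upper ..
  also have "\<dots> = (real m - real j) * (real m + real j + 1) * boros_moll_weight m j"
    unfolding w mj by (simp only: ac_simps)
  finally show ?thesis .
qed

lemma binomial_recurrence_kernel:
  assumes "1 \<le> i"
  shows "real i * real (i+1) * real (j choose (i+1)) - real i * (2*real m+1) * real (j choose i)
       + (real m + 1 - real i) * (real m + real i) * real (j choose (i-1))
     = (real m - real j) * (real m + real j + 1) * real (j choose (i-1))
       - real i * (2*real m + 1 - 2*real j) * real (j choose i)"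
proof -
  obtain h where i: "i = Suc h" using assms by (cases i) auto
  have "real (Suc i) * real (j choose Suc i) = (real j - real i) * real (j choose i)"
    by (rule Suc_times_binomial_real)
  moreover have "real i * real (j choose i) = (real j - real i + 1) * real (j choose h)"
    using Suc_times_binomial_real[of h j] unfolding i by simp
  ultimately show ?thesis unfolding i by simp algebra
qed

text \<open>Creative telescoping: in the weighted sum for the three-term combination, the j-th summand
  is G (j + 1) - G j with the certificate G defined below.\<close>
lemma boros_moll_recurrence:
  assumes "1 \<le> i" "i \<le> m"
  shows "real i * real (i+1) * boros_moll (i+1) m
       = real i * (2*real m+1) * boros_moll i m
         - (real m + 1 - real i) * (real m + real i) * boros_moll (i-1) m"
proof -
  define T where "T j = real i * real (i+1) * real (j choose (i+1)) - real i * (2*real m+1) * real (j choose i)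
       + (real m + 1 - real i) * (real m + real i) * real (j choose (i-1))" for j
  define G where "G j = real i * boros_moll_weight m j * real (j choose i) * (2*real m + 1 - 2*real j)" for j
  have T_eq: "T j = (real m - real j) * (real m + real j + 1) * real (j choose (i-1))
       - real i * (2*real m + 1 - 2*real j) * real (j choose i)" for j
    unfolding T_def using binomial_recurrence_kernel[OF assms(1)] .
  have telescope: "boros_moll_weight m j * T j = G (Suc j) - G j" if "j < m" for j
  proof -
    have absorb: "real i * real (Suc j choose i) = real (Suc j) * real (j choose (i-1))"
      using arg_cong[OF Suc_times_binomial[of "i-1" j], of real] assms(1) by (simp add: algebra_simps)
    have "boros_moll_weight m j * T j
        = (real m - real j) * (real m + real j + 1) * boros_moll_weight m j * real (j choose (i-1)) - G j"
      unfolding T_eq G_def by (simp add: algebra_simps)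
    also have "(real m - real j) * (real m + real j + 1) * boros_moll_weight m j
        = real (Suc j) * (2 * real m - 2 * real j - 1) * boros_moll_weight m (Suc j)"
      using boros_moll_weight_Suc[OF that] by simp
    also have "\<dots> * real (j choose (i-1))
        = (2 * real m - 2 * real j - 1) * boros_moll_weight m (Suc j) * (real (Suc j) * real (j choose (i-1)))"
      by (simp only: ac_simps)
    also have "\<dots> = G (Suc j)"
      unfolding G_def absorb[symmetric] by (simp add: algebra_simps)
    finally show ?thesis .
  qed
  have "(\<Sum>j = 0..m. boros_moll_weight m j * T j) = (\<Sum>j<m. boros_moll_weight m j * T j) + boros_moll_weight m m * T m"
    by (simp add: atLeast0AtMost lessThan_Suc_atMost[symmetric])
  also have "(\<Sum>j<m. boros_moll_weight m j * T j) = (\<Sum>j<m. G (Suc j) - G j)"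
    using telescope by (intro sum.cong) auto
  also have "\<dots> = G m - G 0" by (rule sum_lessThan_telescope)
  also have "boros_moll_weight m m * T m = - G m"
    unfolding T_eq G_def by (simp add: algebra_simps)
  finally have "(\<Sum>j = 0..m. boros_moll_weight m j * T j) = 0"
    using assms by (simp add: G_def)
  moreover define S where "S l = (\<Sum>j = 0..m. boros_moll_weight m j * real (j choose l))" for l
  ultimately have "real i * real (i+1) * S (i+1)
      = real i * (2*real m+1) * S i - (real m + 1 - real i) * (real m + real i) * S (i-1)"
    unfolding T_def by (simp add: sum_distrib_left sum.distrib sum_subtractf algebra_simps)
  moreover define c where "c = 1 / (2::real) ^ (2*m)"
  ultimately show ?thesis
    unfolding boros_moll_eq_weighted_sum S_def[symmetric] c_def[symmetric] by algebra
qed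

text \<open>The ratio r j = j d_j(m) / d_{j-1}(m) satisfies r j * (2m + 1 - r (j + 1)) = (m + 1 - j)(m + j)
  by the recurrence; the bound below is a subsolution of this Riccati recursion, which a descending
  induction starting from j = m + 1 (where it is negative) turns into a lower bound for r j.\<close>
definition ratio_lower_bound :: "real \<Rightarrow> real \<Rightarrow> real" where
  "ratio_lower_bound m j = m + 3/2 - j - (m + 3/4) / (2 * j - 1)"

lemma ratio_lower_bound_subsolution:
  fixes m j :: real
  assumes "1 \<le> j" "j \<le> m"
  shows "ratio_lower_bound m j * (2 * m + 1 - ratio_lower_bound m (j + 1)) \<le> (m + 1 - j) * (m + j)"
proof -
  define u where "u = (m + 3/4) / (2*j - 1)"
  define v where "v = (m + 3/4) / (2*j + 1)"
  have pos: "2*j - 1 > 0" "2*j + 1 > 0" using assms by auto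
  have "u * (2*j - 1) = m + 3/4" and "v * (2*j + 1) = m + 3/4"
    unfolding u_def v_def using pos by simp_all
  define D where "D = (m + 1 - j) * (m + j) - (m + 3/2 - j - u) * (2*m + 1 - (m + 3/2 - (j+1) - v))"
  define E where "E = 16*(j-1)^2 + 104*(j-1) + 133 + 64*(j-1)*(m-j) + 160*(m-j) + 48*(m-j)^2"
  have "D * (16 * (2*j - 1) * (2*j + 1)) = E"
    unfolding D_def E_def using \<open>u * _ = _\<close> \<open>v * _ = _\<close> by algebra
  moreover have "0 \<le> E"
    unfolding E_def using assms by (intro add_nonneg_nonneg mult_nonneg_nonneg) auto
  ultimately have "0 \<le> D"
    using pos by (metis zero_le_mult_iff mult_pos_pos zero_less_numeral not_less)
  moreover have "2 * (j + 1) - 1 = 2*j + 1" by simp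
  ultimately show ?thesis
    unfolding ratio_lower_bound_def u_def v_def D_def by (simp add: add.commute)
qed

lemma ratio_lower_bound_neg: "0 \<le> m \<Longrightarrow> ratio_lower_bound m (m + 1) < 0"
  unfolding ratio_lower_bound_def by (simp add: field_simps)

lemma boros_moll_ratio_lower:
  assumes "1 \<le> j" "j \<le> m + 1"
  shows "ratio_lower_bound (real m) (real j) * boros_moll (j-1) m \<le> real j * boros_moll j m"
  using assms(2)
proof (induction rule: inc_induct)
  case base
  have "ratio_lower_bound (real m) (real (m + 1)) < 0"
    using ratio_lower_bound_neg[of "real m"] by (simp add: add.commute)
  then have "ratio_lower_bound (real m) (real (m + 1)) * boros_moll m m \<le> 0"
    using boros_moll_nonneg[of m m] by (simp add: mult_nonpos_nonneg)
  then show ?case by (simp add: boros_moll_eq_0)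
next
  case (step n)
  define r where "r l = ratio_lower_bound (real m) (real l)" for l
  define P where "P = (real m + 1 - real n) * (real m + real n)"
  have n: "1 \<le> n" "n \<le> m" using assms(1) step.hyps by auto
  have "P * boros_moll (n-1) m
      = real n * (2*real m+1) * boros_moll n m - real n * (real (Suc n) * boros_moll (Suc n) m)"
    using boros_moll_recurrence[OF n] unfolding P_def by (simp add: algebra_simps)
  also have "\<dots> \<le> real n * (2*real m+1) * boros_moll n m - real n * (r (Suc n) * boros_moll n m)"
    using step.IH unfolding r_def by (intro diff_left_mono mult_left_mono) auto
  finally have recur: "P * boros_moll (n-1) m \<le> real n * (2 * real m + 1 - r (Suc n)) * boros_moll n m"
    by (simp add: algebra_simps)
  show ?case
  proof (cases "r n \<le> 0")
    case True
    then show ?thesis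
      using boros_moll_nonneg[of "n-1" m] boros_moll_nonneg[of n m]
      unfolding r_def by (metis mult_nonneg_nonneg mult_nonpos_nonneg of_nat_0_le_iff order_trans)
  next
    case False
    have "r n * (2 * real m + 1 - r (Suc n)) \<le> P"
      using ratio_lower_bound_subsolution[of "real n" "real m"] n unfolding r_def P_def
      by (simp add: add.commute)
    have "P * (r n * boros_moll (n-1) m) \<le> r n * (real n * (2 * real m + 1 - r (Suc n)) * boros_moll n m)"
      using recur False by (simp add: mult.left_commute mult_left_mono)
    also have "\<dots> = (r n * (2 * real m + 1 - r (Suc n))) * (real n * boros_moll n m)" by simp
    also have "\<dots> \<le> P * (real n * boros_moll n m)"
      using \<open>r n * _ \<le> P\<close> boros_moll_nonneg[of n m] by (intro mult_right_mono) auto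
    finally show ?thesis
      using n unfolding r_def P_def by (simp add: mult_le_cancel_left_pos)
  qed
qed

lemma boros_moll_ratio_upper:
  assumes "1 \<le> j" "j \<le> m + 1"
  shows "real j * boros_moll j m \<le> (real m + 1 - real j) * boros_moll (j-1) m"
  using assms(2)
proof (induction rule: inc_induct)
  case base
  then show ?case by (simp add: boros_moll_eq_0)
next
  case (step n)
  have n: "1 \<le> n" "n \<le> m" using assms(1) step.hyps by auto
  have "real n * (real m + real n + 1) * boros_moll n m
      = (real m + 1 - real n) * (real m + real n) * boros_moll (n-1) m
        + real n * ((real (Suc n) * boros_moll (Suc n) m) - (real m - real n) * boros_moll n m)"
    using boros_moll_recurrence[OF n] by (simp add: algebra_simps)
  also have "\<dots> \<le> (real m + 1 - real n) * (real m + real n) * boros_moll (n-1) m"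
    using step.IH by (simp add: mult_nonneg_nonpos)
  also have "\<dots> \<le> (real m + 1 - real n) * (real m + real n + 1) * boros_moll (n-1) m"
    using n boros_moll_nonneg[of "n-1" m] by (intro mult_right_mono mult_left_mono) auto
  finally show ?case
    using n by (simp add: mult.left_commute[of "real n"] mult_le_cancel_left_pos)
qed

text \<open>Multiplying the inequality of the theorem by the positive factor
  fact (i - 1 + k)^4 K^4 (K + 1)^2 (K + 2) turns it into positivity of this form
  at K = i + k and x_j = d_{i-1+j}(m).\<close>
definition cleared_quartic :: "real \<Rightarrow> real \<Rightarrow> real \<Rightarrow> real \<Rightarrow> real \<Rightarrow> real" where
  "cleared_quartic K x0 x1 x2 x3 = x1^4 * (K+1)^2 * (K+2) - x1^2 * x0 * x2 * K * (K+1) * (K+2)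
     - x0^2 * x2^2 * K^2 * (K+2) + x0^2 * x1 * x3 * K^2 * (K+1)"

text \<open>Eliminating x0 and x3 with the recurrence turns the cleared quartic into this homogeneous
  form in w = c (i + 1) d_{i+1}(m) and x = c d_i(m), where i = 1 + a, m = i + 1 + p, K = i + k and
  c = 12 + 8a clears the denominator of the lower ratio bound.\<close>
definition reduced_quartic :: "real \<Rightarrow> real \<Rightarrow> real \<Rightarrow> real \<Rightarrow> real \<Rightarrow> real" where
  "reduced_quartic a p k w x = (let i = 1 + a; m = i + 1 + p; K = i + k; Q0 = (m+1-i)*(m+i); Q1 = (m-i)*(m+i+1) in
     (Q0^2*(i+1)^2*(K+1)^2*(i+2)*(K+2))*x^4 - Q0*w*((2*m+1)*x-w)*i*K*(i+1)*(K+1)*(i+2)*(K+2)*x^2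
     + ((2*m+1)*x-w)^2*i^2*K^2*(- (w^2*(i+2)*(K+2)) + ((2*m+1)*w*x-Q1*x^2)*(i+1)*(K+1)))"

lemma reduced_quartic_elimination:
  fixes a p k x0 x1 x2 x3 :: real
  assumes "(1+a)*(2+a)*x2 = (1+a)*(2*(2+a+p)+1)*x1 - (p+2)*(3+2*a+p)*x0"
    and "(2+a)*(3+a)*x3 = (2+a)*(2*(2+a+p)+1)*x2 - (p+1)*(4+2*a+p)*x1"
  shows "(12+8*a)^4 * (((p+2)*(3+2*a+p))^2 * (2+a)^2 * (3+a) * cleared_quartic (1+a+k) x0 x1 x2 x3)
    = reduced_quartic a p k ((12+8*a)*((2+a)*x2)) ((12+8*a)*x1)"
proof -
  define Q0 where "Q0 = (p+2)*(3+2*a+p)"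
  define y0 where "y0 = Q0 * x0"
  define y3 where "y3 = (2+a)*(3+a)*x3"
  define K where "K = 1+a+k"
  have y0: "y0 = (1+a)*(2*(2+a+p)+1)*x1 - (1+a)*(2+a)*x2"
    unfolding y0_def Q0_def using assms(1) by simp
  have y3: "y3 = (2+a)*(2*(2+a+p)+1)*x2 - (p+1)*(4+2*a+p)*x1"
    unfolding y3_def using assms(2) by simp
  have "Q0^2 * (2+a)^2 * (3+a) * cleared_quartic K x0 x1 x2 x3
    = x1^4*(K+1)^2*(K+2)*Q0^2*(2+a)^2*(3+a) - x1^2*y0*x2*Q0*K*(K+1)*(K+2)*(2+a)^2*(3+a)
      - y0^2*x2^2*K^2*(K+2)*(2+a)^2*(3+a) + y0^2*x1*y3*K^2*(K+1)*(2+a)"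
    unfolding cleared_quartic_def y0_def y3_def by algebra
  moreover have "(12+8*a)^4 * (x1^4*(K+1)^2*(K+2)*Q0^2*(2+a)^2*(3+a)
      - x1^2*y0*x2*Q0*K*(K+1)*(K+2)*(2+a)^2*(3+a)
      - y0^2*x2^2*K^2*(K+2)*(2+a)^2*(3+a) + y0^2*x1*y3*K^2*(K+1)*(2+a))
    = reduced_quartic a p k ((12+8*a)*((2+a)*x2)) ((12+8*a)*x1)"
    unfolding y0 y3 reduced_quartic_def Let_def K_def Q0_def by algebra
  ultimately show ?thesis
    unfolding Q0_def[symmetric] K_def[symmetric] by (simp only:)
qed

text \<open>Coefficients of the Bernstein expansion of the reduced quartic on the interval for w / x
  allowed by the ratio bounds (lemma reduced_quartic_bernstein below), computed by computer algebra.
  All their monomials have positive coefficients.\<close>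
definition bernstein_coeff0 :: "real \<Rightarrow> real \<Rightarrow> real \<Rightarrow> real" where
  "bernstein_coeff0 a p k = 92964255 + 114898827*k + 147424272*p + 600727798*a + 45595833*k^2 + 177663744*p*k + 87134400*p^2 + 684704253*a*k + 901568896*a*p + 1760702717*a^2 + 5745357*k^3 + 68521104*p*k^2 + 102712896*p^2*k + 22780416*p^3 + 249102204*a*k^2 + 993124280*a*p*k + 499970304*a*p^2 + 1833579558*a^2*k + 2489892888*a^2*p + 3090859812*a^3 + 8421792*p*k^3 + 38697984*p^2*k^2 + 26384640*p^3*k + 2224128*p^4 + 28631029*a*k^3 + 347073904*a*p*k^2 + 533299008*a*p^2*k + 121498112*a*p^3 + 604946142*a^2*k^2 + 2479978592*a^2*p*k + 1286286528*a^2*p^2 + 2907893538*a^3*k + 4096353264*a^3*p + 3613190521*a^4 + 4705920*p^2*k^3 + 9767424*p^3*k^2 + 2543616*p^4*k + 38341752*a*p*k^3 + 179731104*a*p^2*k^2 + 125954688*a*p^3*k + 10907648*a*p^4 + 62594339*a^2*k^3 + 775065432*a^2*p*k^2 + 1225118496*a^2*p^2*k + 287436928*a^2*p^3 + 858385068*a^3*k^2 + 3640449824*a^3*p*k + 1953579648*a^3*p^2 + 3028214767*a^4*k + 4457006880*a^4*p + 2956488934*a^5 + 1186560*p^3*k^3 + 930816*p^4*k^2 + 19378848*a*p^2*k^3 + 41132544*a*p^3*k^2 + 11032576*a*p^4*k + 75656320*a^2*p*k^3 + 363237984*a^2*p^2*k^2 + 262291200*a^2*p^3*k + 23359488*a^2*p^4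 + 78627243*a^3*k^3 + 1000813872*a^3*p*k^2 + 1634003840*a^3*p^2*k + 395877120*a^3*p^3 + 786136257*a^4*k^2 + 3475601904*a^4*p*k + 1939305792*a^4*p^2 + 2168215761*a^5*k + 3363888960*a^5*p + 1731096507*a^6 + 113664*p^4*k^3 + 4369280*a*p^3*k^3 + 3507200*a*p^4*k^2 + 33969312*a^2*p^2*k^3 + 73945728*a^2*p^3*k^2 + 20445184*a^2*p^4*k + 84421944*a^3*p*k^3 + 417202624*a^3*p^2*k^2 + 311186432*a^3*p^3*k + 28523520*a^3*p^4 + 62352128*a^4*k^3 + 822658536*a^4*p*k^2 + 1394099040*a^4*p^2*k + 349782784*a^4*p^3 + 483872544*a^5*k^2 + 2252239784*a^5*p*k + 1314483136*a^5*p^2 + 1085017920*a^6*k + 1794540280*a^6*p + 727796768*a^7 + 368640*a*p^4*k^3 + 6670336*a^2*p^3*k^3 + 5482752*a^2*p^4*k^2 + 32849600*a^3*p^2*k^3 + 73583872*a^3*p^3*k^2 + 20974080*a^3*p^4*k + 58177552*a^4*p*k^3 + 297825728*a^4*p^2*k^2 + 230056192*a^4*p^3*k + 21711104*a^4*p^4 + 32236624*a^5*k^3 + 445761712*a^5*p*k^2 + 788843200*a^5*p^2*k + 205600768*a^5*p^3 + 201710832*a^6*k^2 + 1001584304*a^6*p*k + 615939008*a^6*p^2 + 377410544*a^7*k + 675380752*a^7*p + 216763216*a^8 + 475904*a^2*p^4*k^3 + 5405312*a^3*p^3*k^3 + 4550656*a^3*p^4*k^2 + 18920768*a^4*p^2*k^3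 + 43790208*a^4*p^3*k^2 + 12856064*a^4*p^4*k + 25296640*a^5*p*k^3 + 135290560*a^5*p^2*k^2 + 108528512*a^5*p^3*k + 10542592*a^5*p^4 + 10801152*a^6*k^3 + 158888192*a^6*p*k^2 + 295963072*a^6*p^2*k + 80391808*a^6*p^3 + 55823104*a^7*k^2 + 301132032*a^7*p*k + 196958272*a^7*p^2 + 88692224*a^8*k + 175265536*a^8*p + 44202752*a^9 + 305408*a^3*p^4*k^3 + 2453248*a^4*p^3*k^3 + 2114304*a^4*p^4*k^2 + 6488320*a^5*p^2*k^3 + 15592704*a^5*p^3*k^2 + 4705024*a^5*p^4*k + 6753920*a^6*p*k^3 + 38181632*a^6*p^2*k^2 + 31909120*a^6*p^3*k + 3186944*a^6*p^4 + 2241792*a^7*k^3 + 35812224*a^7*p*k^2 + 70978304*a^7*p^2*k + 20162304*a^7*p^3 + 9703168*a^8*k^2 + 58385280*a^8*p*k + 41120000*a^8*p^2 + 13233920*a^9*k + 29752960*a^9*p + 5772544*a^10 + 97280*a^4*p^4*k^3 + 591872*a^5*p^3*k^3 + 521216*a^5*p^4*k^2 + 1225728*a^6*p^2*k^3 + 3078144*a^6*p^3*k^2 + 951296*a^6*p^4*k + 1006592*a^7*p*k^3 + 6118400*a^7*p^2*k^2 + 5347328*a^7*p^3*k + 547840*a^7*p^4 + 258048*a^8*k^3 + 4609024*a^8*p*k^2 + 9870336*a^8*p^2*k + 2942976*a^8*p^3 + 937984*a^9*k^2 + 6558720*a^9*p*k + 5059584*a^9*p^2 + 1101824*a^10*k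 + 2956288*a^10*p + 421888*a^11 + 12288*a^5*p^4*k^3 + 59392*a^6*p^3*k^3 + 53248*a^6*p^4*k^2 + 98304*a^7*p^2*k^3 + 260096*a^7*p^3*k^2 + 81920*a^7*p^4*k + 63488*a^8*p*k^3 + 425984*a^8*p^2*k^2 + 391168*a^8*p^3*k + 40960*a^8*p^4 + 12288*a^9*k^3 + 256000*a^9*p*k^2 + 606208*a^9*p^2*k + 190464*a^9*p^3 + 36864*a^10*k^2 + 321536*a^10*p*k + 278528*a^10*p^2 + 36864*a^11*k + 129024*a^11*p + 12288*a^12"

definition bernstein_coeff1 :: "real \<Rightarrow> real \<Rightarrow> real \<Rightarrow> real" where
  "bernstein_coeff1 a p k = 366868680 + 452149728*k + 579650496*p + 2372605792*a + 180072552*k^2 + 694776912*p*k + 341613504*p^2 + 2701732252*a*k + 3545149024*a*p + 6963917148*a^2 + 23127888*k^3 + 268158432*p*k^2 + 399354624*p^2*k + 89250816*p^3 + 988871816*a*k^2 + 3890954392*a*p*k + 1958575104*a*p^2 + 7261283832*a^2*k + 9796845176*a^2*p + 12252505648*a^3 + 33592656*p*k^3 + 149905728*p^2*k^2 + 102326016*p^3*k + 8730624*p^4 + 116151116*a*k^3 + 1364321456*a*p*k^2 + 2074365216*a*p^2*k + 475515392*a*p^3 + 2417306908*a^2*k^2 + 9743256608*a^2*p*k + 5036003232*a^2*p^2 + 11572041392*a^3*k + 16139870096*a^3*p + 14371829344*a^4 + 18510336*p^2*k^3 + 37593600*p^3*k^2 + 9882624*p^4*k + 154118648*a*p*k^3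 + 697788288*a*p^2*k^2 + 488417408*a*p^3*k + 42801152*a*p^4 + 256419976*a^2*k^3 + 3065298440*a^2*p*k^2 + 4769314752*a^2*p^2*k + 1123979904*a^2*p^3 + 3459211392*a^3*k^2 + 14361116608*a^3*p*k + 7646380608*a^3*p^2 + 12131105768*a^4*k + 17604737808*a^4*p + 11819158896*a^5 + 4611840*p^3*k^3 + 3581952*p^4*k^2 + 76568544*a*p^2*k^3 + 158478592*a*p^3*k^2 + 42900992*a*p^4*k + 307290416*a^2*p*k^3 + 1414616928*a^2*p^2*k^2 + 1017220608*a^2*p^3*k + 91674112*a^2*p^4 + 326166012*a^3*k^3 + 3991811344*a^3*p*k^2 + 6369821056*a^3*p^2*k + 1546920704*a^3*p^3 + 3203637108*a^4*k^2 + 13794982976*a^4*p*k + 7591258752*a^4*p^2 + 8766209284*a^5*k + 13343672928*a^5*p + 6972329868*a^6 + 439296*p^4*k^3 + 17013376*a*p^3*k^3 + 13527040*a*p^4*k^2 + 135011520*a^2*p^2*k^3 + 285339008*a^2*p^3*k^2 + 79633408*a^2*p^4*k + 347984568*a^3*p*k^3 + 1631674304*a^3*p^2*k^2 + 1207258112*a^3*p^3*k + 112024576*a^3*p^4 + 262992512*a^4*k^3 + 3321772008*a^4*p*k^2 + 5446300800*a^4*p^2*k + 1366018816*a^4*p^3 + 2001947936*a^5*k^2 + 9024035048*a^5*p*k + 5148903552*a^5*p^2 + 4444477120*a^6*k + 7169711032*a^6*p + 2964385312*a^7 + 1427968*a*p^4*k^3 + 26030336*a^2*p^3*k^3 + 21223936*a^2*p^4*k^2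 + 131622688*a^3*p^2*k^3 + 284476160*a^3*p^3*k^2 + 81905664*a^3*p^4*k + 245176688*a^4*p*k^3 + 1171760992*a^4*p^2*k^2 + 892953600*a^4*p^3*k + 85397504*a^4*p^4 + 139104016*a^5*k^3 + 1834015696*a^5*p*k^2 + 3092343136*a^5*p^2*k + 802552320*a^5*p^3 + 852460848*a^6*k^2 + 4074418768*a^6*p*k + 2416644384*a^6*p^2 + 1575803696*a^7*k + 2731790320*a^7*p + 898184464*a^8 + 1850368*a^2*p^4*k^3 + 21145216*a^3*p^3*k^3 + 17708032*a^3*p^4*k^2 + 76730176*a^4*p^2*k^3 + 169639808*a^4*p^3*k^2 + 50393088*a^4*p^4*k + 110497856*a^5*p*k^3 + 537130432*a^5*p^2*k^2 + 421482368*a^5*p^3*k + 41568256*a^5*p^4 + 48140288*a^6*k^3 + 674148544*a^6*p*k^2 + 1166976448*a^6*p^2*k + 313661056*a^6*p^3 + 243344896*a^7*k^2 + 1257219264*a^7*p*k + 775489344*a^7*p^2 + 381234176*a^8*k + 724771904*a^8*p + 188200448*a^9 + 1194496*a^3*p^4*k^3 + 9620736*a^4*p^3*k^3 + 8285696*a^4*p^4*k^2 + 26849024*a^5*p^2*k^3 + 60522240*a^5*p^3*k^2 + 18537984*a^5*p^4*k + 31449344*a^6*p*k^3 + 153974016*a^6*p^2*k^2 + 123979520*a^6*p^3*k + 12610048*a^6*p^4 + 10480128*a^7*k^3 + 160613120*a^7*p*k^2 + 282961152*a^7*p^2*k + 78624000*a^7*p^3 + 44355072*a^8*k^2 + 255851264*a^8*p*k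 + 163143424*a^8*p^2 + 59584000*a^9*k + 128424192*a^9*p + 25709056*a^10 + 384000*a^4*p^4*k^3 + 2325504*a^5*p^3*k^3 + 2061312*a^5*p^4*k^2 + 5285888*a^6*p^2*k^3 + 11965440*a^6*p^3*k^2 + 3773440*a^6*p^4*k + 5344256*a^7*p*k^3 + 25495552*a^7*p^2*k^2 + 20780032*a^7*p^3*k + 2178048*a^7*p^4 + 1298432*a^8*k^3 + 23192576*a^8*p*k^2 + 40335360*a^8*p^2*k + 11467776*a^8*p^3 + 4632576*a^9*k^2 + 31876096*a^9*p*k + 20453376*a^9*p^2 + 5369856*a^10*k + 14027776*a^10*p + 2035712*a^11 + 49152*a^5*p^4*k^3 + 233472*a^6*p^3*k^3 + 212992*a^6*p^4*k^2 + 479232*a^7*p^2*k^3 + 1011712*a^7*p^3*k^2 + 327680*a^7*p^4*k + 477184*a^8*p*k^3 + 1961984*a^8*p^2*k^2 + 1519616*a^8*p^3*k + 163840*a^8*p^4 + 69632*a^9*k^3 + 1759232*a^9*p*k^2 + 2682880*a^9*p^2*k + 741376*a^9*p^3 + 208896*a^10*k^2 + 2086912*a^10*p*k + 1200128*a^10*p^2 + 208896*a^11*k + 804864*a^11*p + 69632*a^12 + 8192*a^8*p^2*k^3 + 16384*a^9*p*k^3 + 24576*a^9*p^2*k^2 + 49152*a^10*p*k^2 + 24576*a^10*p^2*k + 49152*a^11*p*k + 8192*a^11*p^2 + 16384*a^12*p"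

definition bernstein_coeff2 :: "real \<Rightarrow> real \<Rightarrow> real \<Rightarrow> real" where
  "bernstein_coeff2 a p k = 542637360 + 666131472*k + 854382816*p + 3511166688*a + 265601808*k^2 + 1017099072*p*k + 502449696*p^2 + 3989729088*a*k + 5223531456*a*p + 10317633792*a^2 + 34612272*k^3 + 391550112*p*k^2 + 581721696*p^2*k + 131404032*p^3 + 1465854624*a*k^2 + 5702947056*a*p*k + 2876784192*a*p^2 + 10759045248*a^2*k + 14437142640*a^2*p + 18189727872*a^3 + 49674816*p*k^3 + 216707616*p^2*k^2 + 149071104*p^3*k + 12911616*p^4 + 175218624*a*k^3 + 1999776384*a*p*k^2 + 3019996224*a*p^2*k + 699093504*a*p^3 + 3606690672*a^2*k^2 + 14311772832*a^2*p*k + 7387900224*a^2*p^2 + 17227055648*a^3*k + 23806149984*a^3*p + 21404673456*a^4 + 26954208*p^2*k^3 + 54183168*p^3*k^2 + 14487552*p^4*k + 229598352*a*p*k^3 + 1009799136*a*p^2*k^2 + 710850816*a*p^3*k + 63277056*a*p^4 + 390717744*a^2*k^3 + 4518267408*a^2*p*k^2 + 6942183264*a^2*p^2*k + 1650163968*a^2*p^3 + 5205223168*a^3*k^2 + 21170657600*a^3*p*k + 11205807168*a^3*p^2 + 18177760752*a^4*k + 26020482624*a^4*p + 17689553184*a^5 + 6656256*p^3*k^3 + 5197824*p^4*k^2 + 111884832*a*p^2*k^3 + 228393216*a*p^3*k^2 + 62931456*a*p^4*k + 462509088*a^2*p*k^3 + 2051013312*a^2*p^2*k^2 + 1479257856*a^2*p^3*k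 + 135541248*a^2*p^4 + 503359328*a^3*k^3 + 5932023840*a^3*p*k^2 + 9274613696*a^3*p^2*k + 2268036096*a^3*p^3 + 4874756832*a^4*k^2 + 20452886784*a^4*p*k + 11116916256*a^4*p^2 + 13256035936*a^5*k + 19799421184*a^5*p + 10512626912*a^6 + 635904*p^4*k^3 + 24579072*a*p^3*k^3 + 19671552*a*p^4*k^2 + 198261312*a^2*p^2*k^3 + 411326208*a^2*p^3*k^2 + 116971008*a^2*p^4*k + 531424240*a^3*p*k^3 + 2372819584*a^3*p^2*k^2 + 1754304000*a^3*p^3*k + 165725184*a^3*p^4 + 412579968*a^4*k^3 + 4995966288*a^4*p*k^2 + 7938190272*a^4*p^2*k + 2000100096*a^4*p^3 + 3091929344*a^5*k^2 + 13502184080*a^5*p*k + 7538613504*a^5*p^2 + 6807706240*a^6*k + 10712092976*a^6*p + 4519107328*a^7 + 2073600*a*p^4*k^3 + 37656576*a^2*p^3*k^3 + 30970368*a^2*p^4*k^2 + 194660864*a^3*p^2*k^3 + 410254848*a^3*p^3*k^2 + 120566784*a^3*p^4*k + 382504672*a^4*p*k^3 + 1712097920*a^4*p^2*k^2 + 1296603648*a^4*p^3*k + 126481920*a^4*p^4 + 222970304*a^5*k^3 + 2809275296*a^5*p*k^2 + 4517686144*a^5*p^2*k + 1173430272*a^5*p^3 + 1343481152*a^6*k^2 + 6187429920*a^6*p*k + 3540849408*a^6*p^2 + 2458332224*a^7*k + 4130935648*a^7*p + 1392072896*a^8 + 2700288*a^2*p^4*k^3 + 30631680*a^3*p^3*k^3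 + 25962496*a^3*p^4*k^2 + 114718208*a^4*p^2*k^3 + 244732160*a^4*p^3*k^2 + 74406912*a^4*p^4*k + 178155328*a^5*p*k^3 + 791040768*a^5*p^2*k^2 + 611474688*a^5*p^3*k + 61681664*a^5*p^4 + 79409152*a^6*k^3 + 1063023040*a^6*p*k^2 + 1713041408*a^6*p^2*k + 457904896*a^6*p^3 + 394398464*a^7*k^2 + 1957179840*a^7*p*k + 1139239680*a^7*p^2 + 610768384*a^8*k + 1119571776*a^8*p + 299096832*a^9 + 1755136*a^3*p^4*k^3 + 13950464*a^4*p^3*k^3 + 12222464*a^4*p^4*k^2 + 40893952*a^5*p^2*k^3 + 87314944*a^5*p^3*k^2 + 27484160*a^5*p^4*k + 53487232*a^6*p*k^3 + 230064640*a^6*p^2*k^2 + 179659264*a^6*p^3*k + 18761728*a^6*p^4 + 17970432*a^7*k^3 + 265821056*a^7*p*k^2 + 419578368*a^7*p^2*k + 114576896*a^7*p^3 + 74788608*a^8*k^2 + 415964032*a^8*p*k + 241319424*a^8*p^2 + 99290880*a^9*k + 206284416*a^9*p + 42472704*a^10 + 569344*a^4*p^4*k^3 + 3372032*a^5*p^3*k^3 + 3063808*a^5*p^4*k^2 + 8356864*a^6*p^2*k^3 + 17251328*a^6*p^3*k^2 + 5623808*a^6*p^4*k + 9962496*a^7*p*k^3 + 39283712*a^7*p^2*k^2 + 30063616*a^7*p^3*k + 3252224*a^7*p^4 + 2347008*a^8*k^3 + 41831424*a^8*p*k^2 + 61238272*a^8*p^2*k + 16675840*a^8*p^3 + 8269824*a^9*k^2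 + 56183808*a^9*p*k + 30802944*a^9*p^2 + 9498624*a^10*k + 24314880*a^10*p + 3575808*a^11 + 73728*a^5*p^4*k^3 + 337920*a^6*p^3*k^3 + 319488*a^6*p^4*k^2 + 835584*a^7*p^2*k^3 + 1456128*a^7*p^3*k^2 + 491520*a^7*p^4*k + 1050624*a^8*p*k^3 + 3293184*a^8*p^2*k^2 + 2193408*a^8*p^3*k + 245760*a^8*p^4 + 135168*a^9*k^3 + 3741696*a^9*p*k^2 + 4374528*a^9*p^2*k + 1075200*a^9*p^3 + 405504*a^10*k^2 + 4331520*a^10*p*k + 1916928*a^10*p^2 + 405504*a^11*k + 1640448*a^11*p + 135168*a^12 + 24576*a^8*p^2*k^3 + 49152*a^9*p*k^3 + 73728*a^9*p^2*k^2 + 147456*a^10*p*k^2 + 73728*a^10*p^2*k + 147456*a^11*p*k + 24576*a^11*p^2 + 49152*a^12*p"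

definition bernstein_coeff3 :: "real \<Rightarrow> real \<Rightarrow> real \<Rightarrow> real" where
  "bernstein_coeff3 a p k = 356659200 + 435725568*k + 559861632*p + 2308200192*a + 173601792*k^2 + 661353984*p*k + 328924800*p^2 + 2614626432*a*k + 3419898624*a*p + 6788251008*a^2 + 22871808*k^3 + 253321344*p*k^2 + 377011584*p^2*k + 86303232*p^3 + 962447616*a*k^2 + 3709544256*a*p*k + 1879573248*a*p^2 + 7071743232*a^2*k + 9448259904*a^2*p + 11988066048*a^3 + 32389632*p*k^3 + 139065984*p^2*k^2 + 97003008*p^3*k + 8543232*p^4 + 116678016*a*k^3 + 1297334016*a*p*k^2 + 1953787392*a*p^2*k + 458320896*a*p^3 + 2382818688*a^2*k^2 + 9321844608*a^2*p*k + 4817401344*a^2*p^2 + 11373142272*a^3*k + 15584919936*a^3*p + 14148926464*a^4 + 17324928*p^2*k^3 + 34877952*p^3*k^2 + 9538560*p^4*k + 150648768*a*p*k^3 + 647409024*a*p^2*k^2 + 461638656*a*p^3*k + 41859072*a*p^4 + 262780416*a^2*k^3 + 2944914624*a^2*p*k^2 + 4484232576*a^2*p^2*k + 1079737344*a^2*p^3 + 3467730432*a^3*k^2 + 13828803072*a^3*p*k + 7292830464*a^3*p^2 + 12077440768*a^4*k + 17060556544*a^4*p + 11748828416*a^5 + 4271616*p^3*k^3 + 3400704*p^4*k^2 + 71985024*a*p^2*k^3 + 146714112*a*p^3*k^2 + 41444352*a*p^4*k + 306350208*a^2*p*k^3 + 1314717696*a^2*p^2*k^2 + 958625280*a^2*p^3*k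 + 89662464*a^2*p^4 + 342878592*a^3*k^3 + 3895326336*a^3*p*k^2 + 5983720704*a^3*p^2*k + 1480897536*a^3*p^3 + 3283818368*a^4*k^2 + 13429152256*a^4*p*k + 7222291584*a^4*p^2 + 8887240064*a^5*k + 13026458624*a^5*p + 7033061248*a^6 + 414720*p^4*k^3 + 15745536*a*p^3*k^3 + 12883968*a*p^4*k^2 + 127878912*a^2*p^2*k^3 + 263678976*a^2*p^3*k^2 + 77082624*a^2*p^4*k + 356953152*a^3*p*k^3 + 1522432512*a^3*p^2*k^2 + 1134265344*a^3*p^3*k + 109658112*a^3*p^4 + 285638912*a^4*k^3 + 3318908096*a^4*p*k^2 + 5118952704*a^4*p^2*k + 1302923776*a^4*p^3 + 2113677056*a^5*k^2 + 8943516352*a^5*p*k + 4891065856*a^5*p^2 + 4622252800*a^6*k + 7094221376*a^6*p + 3056321792*a^7 + 1354752*a*p^4*k^3 + 24081408*a^2*p^3*k^3 + 20321280*a^2*p^4*k^2 + 126169344*a^3*p^2*k^3 + 262410240*a^3*p^3*k^2 + 79540224*a^3*p^4*k + 262306688*a^4*p*k^3 + 1101616896*a^4*p^2*k^2 + 836199424*a^4*p^3*k + 83740672*a^4*p^4 + 157581056*a^5*k^3 + 1899969152*a^5*p*k^2 + 2915639040*a^5*p^2*k + 762427392*a^5*p^3 + 936441088*a^6*k^2 + 4158426752*a^6*p*k + 2296361216*a^6*p^2 + 1698913536*a^7*k + 2768207744*a^7*p + 956651264*a^8 + 1769472*a^2*p^4*k^3 + 19550208*a^3*p^3*k^3 +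 17080320*a^3*p^4*k^2 + 75025920*a^4*p^2*k^3 + 156139520*a^4*p^3*k^2 + 49168384*a^4*p^4*k + 126018048*a^5*p*k^3 + 512197120*a^5*p^2*k^2 + 393199616*a^5*p^3*k + 40878080*a^5*p^4 + 57602048*a^6*k^3 + 739196416*a^6*p*k^2 + 1109404160*a^6*p^2*k + 296644608*a^6*p^3 + 282054656*a^7*k^2 + 1347273216*a^7*p*k + 739995136*a^7*p^2 + 432603136*a^8*k + 765904384*a^8*p + 210403328*a^9 + 1155072*a^3*p^4*k^3 + 8880128*a^4*p^3*k^3 + 8069120*a^4*p^4*k^2 + 27205632*a^5*p^2*k^3 + 55533568*a^5*p^3*k^2 + 18202624*a^5*p^4*k + 39642112*a^6*p*k^3 + 150968320*a^6*p^2*k^2 + 115130368*a^6*p^3*k + 12451840*a^6*p^4 + 13467648*a^7*k^3 + 193051648*a^7*p*k^2 + 274221056*a^7*p^2*k + 73973760*a^7*p^3 + 55324672*a^8*k^2 + 297915392*a^8*p*k + 157700096*a^8*p^2 + 72765440*a^9*k + 146308096*a^9*p + 30908416*a^10 + 376832*a^4*p^4*k^3 + 2138112*a^5*p^3*k^3 + 2031616*a^5*p^4*k^2 + 5758976*a^6*p^2*k^3 + 10928128*a^6*p^3*k^2 + 3735552*a^6*p^4*k + 7918592*a^7*p*k^3 + 26554368*a^7*p^2*k^2 + 19185664*a^7*p^3*k + 2162688*a^7*p^4 + 1830912*a^8*k^3 + 32521216*a^8*p*k^2 + 40951808*a^8*p^2*k + 10723328*a^8*p^3 + 6393856*a^9*k^2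 + 42974208*a^9*p*k + 20484096*a^9*p^2 + 7294976*a^10*k + 18371584*a^10*p + 2732032*a^11 + 49152*a^5*p^4*k^3 + 212992*a^6*p^3*k^3 + 212992*a^6*p^4*k^2 + 626688*a^7*p^2*k^3 + 917504*a^7*p^3*k^2 + 327680*a^7*p^4*k + 923648*a^8*p*k^3 + 2404352*a^8*p^2*k^2 + 1392640*a^8*p^3*k + 163840*a^8*p^4 + 110592*a^9*k^3 + 3229696*a^9*p*k^2 + 3125248*a^9*p^2*k + 688128*a^9*p^3 + 331776*a^10*k^2 + 3688448*a^10*p*k + 1347584*a^10*p^2 + 331776*a^11*k + 1382400*a^11*p + 110592*a^12 + 24576*a^8*p^2*k^3 + 49152*a^9*p*k^3 + 73728*a^9*p^2*k^2 + 147456*a^10*p*k^2 + 73728*a^10*p^2*k + 147456*a^11*p*k + 24576*a^11*p^2 + 49152*a^12*p"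

definition bernstein_coeff4 :: "real \<Rightarrow> real \<Rightarrow> real \<Rightarrow> real" where
  "bernstein_coeff4 a p k = 87920640 + 106831872*k + 137687040*p + 568885248*a + 42467328*k^2 + 161326080*p*k + 80932608*p^2 + 641875968*a*k + 839863296*a*p + 1673782272*a^2 + 5640192*k^3 + 61378560*p*k^2 + 91881216*p^2*k + 21358080*p^3 + 236335104*a*k^2 + 904269312*a*p*k + 461293056*a*p^2 + 1740331008*a^2*k + 2317911552*a^2*p + 2959936512*a^3 + 7879680*p*k^3 + 33530112*p^2*k^2 + 23846400*p^3*k + 2135808*p^4 + 28975104*a*k^3 + 314717184*a*p*k^2 + 474667776*a*p^2*k + 113190912*a*p^3 + 588460032*a^2*k^2 + 2273121792*a^2*p*k + 1179028224*a^2*p^2 + 2810185728*a^3*k + 3822134784*a^3*p + 3502867456*a^4 + 4167936*p^2*k^3 + 8501760*p^3*k^2 + 2384640*p^4*k + 36813312*a*p*k^3 + 155561472*a*p^2*k^2 + 113149440*a*p^3*k + 10464768*a*p^4 + 65885184*a^2*k^3 + 716788224*a^2*p*k^2 + 1085971968*a^2*p^2*k + 266015232*a^2*p^3 + 863321088*a^3*k^2 + 3378656256*a^3*p*k + 1779641856*a^3*p^2 + 3002555392*a^4*k + 4187726848*a^4*p + 2921938944*a^5 + 1036800*p^3*k^3 + 850176*p^4*k^2 + 17273088*a*p^2*k^3 + 35610624*a*p^3*k^2 + 10361088*a*p^4*k + 75465216*a^2*p*k^3 + 314972928*a^2*p^2*k^2 + 234150912*a^2*p^3*k + 22415616*a^2*p^4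 + 87057408*a^3*k^3 + 954259968*a^3*p*k^2 + 1444737024*a^3*p^2*k + 363807744*a^3*p^3 + 826560512*a^4*k^2 + 3295596544*a^4*p*k + 1757234688*a^4*p^2 + 2229195776*a^5*k + 3206801408*a^5*p + 1761667072*a^6 + 103680*p^4*k^3 + 3801600*a*p^3*k^3 + 3220992*a*p^4*k^2 + 30647808*a^2*p^2*k^3 + 63687168*a^2*p^3*k^2 + 19270656*a^2*p^4*k + 89089536*a^3*p*k^3 + 364036608*a^3*p^2*k^2 + 275933184*a^3*p^3*k + 27414528*a^3*p^4 + 73699328*a^4*k^3 + 822049280*a^4*p*k^2 + 1232904192*a^4*p^2*k + 319009792*a^4*p^3 + 539823104*a^5*k^2 + 2213121536*a^5*p*k + 1186848768*a^5*p^2 + 1174005760*a^6*k + 1757297152*a^6*p + 773803008*a^7 + 338688*a*p^4*k^3 + 5778432*a^2*p^3*k^3 + 5080320*a^2*p^4*k^2 + 30279168*a^3*p^2*k^3 + 63022080*a^3*p^3*k^2 + 19885056*a^3*p^4*k + 66801152*a^4*p*k^3 + 263447040*a^4*p^2*k^2 + 202461184*a^4*p^3*k + 20935168*a^4*p^4 + 41478144*a^5*k^3 + 478947840*a^5*p*k^2 + 701445632*a^5*p^2*k + 185935872*a^5*p^3 + 243709952*a^6*k^2 + 1043831296*a^6*p*k + 556214784*a^6*p^2 + 438974464*a^7*k + 693681664*a^7*p + 245999616*a^8 + 442368*a^2*p^4*k^3 + 4657152*a^3*p^3*k^3 + 4270080*a^3*p^4*k^2 + 18117120*a^4*p^2*k^3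 + 37253120*a^4*p^3*k^2 + 12292096*a^4*p^4*k + 33063936*a^5*p*k^3 + 122996224*a^5*p^2*k^2 + 94674944*a^5*p^3*k + 10219520*a^5*p^4 + 15532032*a^6*k^3 + 191433728*a^6*p*k^2 + 267376128*a^6*p^2*k + 72007680*a^6*p^3 + 75177984*a^7*k^2 + 346180608*a^7*p*k + 179286528*a^7*p^2 + 114376704*a^8*k + 195838976*a^8*p + 55304192*a^9 + 288768*a^3*p^4*k^3 + 2097152*a^4*p^3*k^3 + 2017280*a^4*p^4*k^2 + 6672384*a^5*p^2*k^3 + 13148160*a^5*p^3*k^2 + 4550656*a^5*p^4*k + 10850304*a^6*p*k^3 + 36696064*a^6*p^2*k^2 + 27541504*a^6*p^3*k + 3112960*a^6*p^4 + 3735552*a^7*k^3 + 52031488*a^7*p*k^2 + 66625536*a^7*p^2*k + 17858560*a^7*p^3 + 15187968*a^8*k^2 + 79417344*a^8*p*k + 38404096*a^8*p^2 + 19824640*a^9*k + 38694912*a^9*p + 8372224*a^10 + 94208*a^4*p^4*k^3 + 499712*a^5*p^3*k^3 + 507904*a^5*p^4*k^2 + 1462272*a^6*p^2*k^3 + 2564096*a^6*p^3*k^2 + 933888*a^6*p^4*k + 2293760*a^7*p*k^3 + 6647808*a^7*p^2*k^2 + 4554752*a^7*p^3*k + 540672*a^7*p^4 + 524288*a^8*k^3 + 9273344*a^8*p*k^2 + 10178560*a^8*p^2*k + 2572288*a^8*p^3 + 1818624*a^9*k^2 + 12107776*a^9*p*k + 5074944*a^9*p^2 + 2064384*a^10*k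 + 5128192*a^10*p + 770048*a^11 + 12288*a^5*p^4*k^3 + 49152*a^6*p^3*k^3 + 53248*a^6*p^4*k^2 + 172032*a^7*p^2*k^3 + 212992*a^7*p^3*k^2 + 81920*a^7*p^4*k + 286720*a^8*p*k^3 + 647168*a^8*p^2*k^2 + 327680*a^8*p^3*k + 40960*a^8*p^4 + 32768*a^9*k^3 + 991232*a^9*p*k^2 + 827392*a^9*p^2*k + 163840*a^9*p^3 + 98304*a^10*k^2 + 1122304*a^10*p*k + 352256*a^10*p^2 + 98304*a^11*k + 417792*a^11*p + 32768*a^12 + 8192*a^8*p^2*k^3 + 16384*a^9*p*k^3 + 24576*a^9*p^2*k^2 + 49152*a^10*p*k^2 + 24576*a^10*p^2*k + 49152*a^11*p*k + 8192*a^11*p^2 + 16384*a^12*p"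

lemma reduced_quartic_bernstein:
  "(5+4*p)^4 * reduced_quartic a p k W ((12 + 8*a)*V) =
     bernstein_coeff0 a p k * (12*V + 12*p*V + 8*a*V + 8*a*p*V - W)^4
   + bernstein_coeff1 a p k * (W - (7 + 8*p + 8*a + 8*a*p)*V) * (12*V + 12*p*V + 8*a*V + 8*a*p*V - W)^3
   + bernstein_coeff2 a p k * (W - (7 + 8*p + 8*a + 8*a*p)*V)^2 * (12*V + 12*p*V + 8*a*V + 8*a*p*V - W)^2
   + bernstein_coeff3 a p k * (W - (7 + 8*p + 8*a + 8*a*p)*V)^3 * (12*V + 12*p*V + 8*a*V + 8*a*p*V - W)
   + bernstein_coeff4 a p k * (W - (7 + 8*p + 8*a + 8*a*p)*V)^4"
  unfolding reduced_quartic_def Let_def bernstein_coeff0_def bernstein_coeff1_def bernstein_coeff2_def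
    bernstein_coeff3_def bernstein_coeff4_def
  by algebra

lemma bernstein_coeffs_sign:
  assumes "0 \<le> a" "0 \<le> p" "0 \<le> k"
  shows "0 < bernstein_coeff0 a p k" "0 \<le> bernstein_coeff1 a p k" "0 \<le> bernstein_coeff2 a p k"
    "0 \<le> bernstein_coeff3 a p k" "0 < bernstein_coeff4 a p k"
  unfolding bernstein_coeff0_def bernstein_coeff1_def bernstein_coeff2_def bernstein_coeff3_def bernstein_coeff4_def
  using assms by (intro add_pos_nonneg add_nonneg_nonneg mult_nonneg_nonneg zero_le_power; simp)+

lemma bernstein_quartic_pos:
  fixes s t c0 c1 c2 c3 c4 :: real
  assumes "0 \<le> s" "0 \<le> t" "0 < s + t" "0 < c0" "0 \<le> c1" "0 \<le> c2" "0 \<le> c3" "0 < c4"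
  shows "0 < c0 * t^4 + c1 * s * t^3 + c2 * s^2 * t^2 + c3 * s^3 * t + c4 * s^4"
proof -
  have "0 \<le> c1 * s * t^3" "0 \<le> c2 * s^2 * t^2" "0 \<le> c3 * s^3 * t" "0 \<le> c0 * t^4" "0 \<le> c4 * s^4"
    using assms by auto
  moreover have "0 < c0 * t^4 \<or> 0 < c4 * s^4"
    using assms by (cases "t = 0") auto
  ultimately show ?thesis by linarith
qed

lemma reduced_quartic_pos:
  fixes a p k w x :: real
  assumes "0 \<le> a" "0 \<le> p" "0 \<le> k" "0 < x"
    and "(7 + 8*p + 8*a + 8*a*p) * x \<le> w" "w \<le> (12 + 8*a) * (p + 1) * x"
  shows "0 < reduced_quartic a p k w ((12 + 8*a) * x)"
proof -
  define s where "s = w - (7 + 8*p + 8*a + 8*a*p) * x"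
  define t where "t = 12*x + 12*p*x + 8*a*x + 8*a*p*x - w"
  have "0 \<le> s" "0 \<le> t" using assms unfolding s_def t_def by (simp_all add: algebra_simps)
  moreover have "s + t = (5 + 4*p) * x" unfolding s_def t_def by (simp add: algebra_simps)
  then have "0 < s + t" using assms by simp
  ultimately have "0 < (5 + 4*p)^4 * reduced_quartic a p k w ((12 + 8*a) * x)"
    unfolding reduced_quartic_bernstein s_def[symmetric] t_def[symmetric]
    using bernstein_quartic_pos bernstein_coeffs_sign[OF assms(1-3)] by (simp add: mult.assoc)
  then show ?thesis using assms(2) by (simp add: zero_less_mult_iff)
qed

lemma cleared_quartic_pos_of_recurrence:
  fixes a p k x0 x1 x2 x3 :: real
  assumes "0 \<le> a" "0 \<le> p" "0 \<le> k" "0 < x1"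
    and "(1+a)*(2+a)*x2 = (1+a)*(2*(2+a+p)+1)*x1 - (p+2)*(3+2*a+p)*x0"
    and "(2+a)*(3+a)*x3 = (2+a)*(2*(2+a+p)+1)*x2 - (p+1)*(4+2*a+p)*x1"
    and "(7 + 8*p + 8*a + 8*a*p) * x1 \<le> (12+8*a)*((2+a)*x2)"
    and "(2+a)*x2 \<le> (p+1)*x1"
  shows "0 < cleared_quartic (1+a+k) x0 x1 x2 x3"
proof -
  have "(12+8*a)*((2+a)*x2) \<le> (12+8*a)*((p+1)*x1)"
    using assms(1,8) by (intro mult_left_mono) auto
  then have "0 < reduced_quartic a p k ((12+8*a)*((2+a)*x2)) ((12+8*a)*x1)"
    using reduced_quartic_pos[OF assms(1-4,7)] by (simp add: mult.assoc)
  moreover define c where "c = (12+8*a)^4 * (((p+2)*(3+2*a+p))^2 * (2+a)^2 * (3+a))"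
  then have "c * cleared_quartic (1+a+k) x0 x1 x2 x3
      = reduced_quartic a p k ((12+8*a)*((2+a)*x2)) ((12+8*a)*x1)"
    using reduced_quartic_elimination[OF assms(5,6)] by (simp only: mult.assoc)
  moreover have "0 < c" unfolding c_def using assms(1,2) by simp
  ultimately show ?thesis by (metis zero_less_mult_pos)
qed

lemma boros_moll_cleared_quartic_pos:
  assumes "1 \<le> i" "i < m"
  shows "0 < cleared_quartic (real (i + k))
    (boros_moll (i-1) m) (boros_moll i m) (boros_moll (i+1) m) (boros_moll (i+2) m)"
proof -
  define a where "a = real (i - 1)"
  define p where "p = real (m - i - 1)"
  have i: "real i = 1 + a" and m: "real m = 2 + a + p"
    using assms unfolding a_def p_def by (simp_all add: of_nat_diff)
  have "a \<ge> 0" "p \<ge> 0" unfolding a_def p_def by simp_all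
  have idx: "i + 1 + 1 = i + 2" "i + 1 - 1 = i" by simp_all
  have rec1: "(1+a)*(2+a)*boros_moll (i+1) m
      = (1+a)*(2*(2+a+p)+1)*boros_moll i m - (p+2)*(3+2*a+p)*boros_moll (i-1) m"
    using boros_moll_recurrence[of i m] assms unfolding of_nat_add i m by (simp add: algebra_simps)
  have rec2: "(2+a)*(3+a)*boros_moll (i+2) m
      = (2+a)*(2*(2+a+p)+1)*boros_moll (i+1) m - (p+1)*(4+2*a+p)*boros_moll i m"
    using boros_moll_recurrence[of "i+1" m, unfolded idx] assms unfolding of_nat_add i m
    by (simp add: algebra_simps)
  have "(12+8*a) * ratio_lower_bound (real m) (real (i+1)) = 7 + 8*p + 8*a + 8*a*p"
  proof -
    have "2 * real (i+1) - 1 = 3 + 2*a" unfolding of_nat_add i by simp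
    moreover have "3 + 2*a \<noteq> 0" using \<open>a \<ge> 0\<close> by simp
    ultimately show ?thesis
      unfolding ratio_lower_bound_def m of_nat_add i by (simp add: field_simps)
  qed
  moreover have "ratio_lower_bound (real m) (real (i+1)) * boros_moll i m \<le> (2+a) * boros_moll (i+1) m"
    using boros_moll_ratio_lower[of "i+1" m] assms unfolding of_nat_add i by simp
  ultimately have lower: "(7 + 8*p + 8*a + 8*a*p) * boros_moll i m \<le> (12+8*a)*((2+a)*boros_moll (i+1) m)"
    using \<open>a \<ge> 0\<close> by (metis mult.assoc mult_left_mono add_nonneg_nonneg zero_le_numeral mult_nonneg_nonneg)
  have upper: "(2+a)*boros_moll (i+1) m \<le> (p+1)*boros_moll i m"
    using boros_moll_ratio_upper[of "i+1" m] assms unfolding of_nat_add i m by (simp add: add.commute)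
  have "0 < cleared_quartic (1 + a + real k)
      (boros_moll (i-1) m) (boros_moll i m) (boros_moll (i+1) m) (boros_moll (i+2) m)"
    using \<open>a \<ge> 0\<close> \<open>p \<ge> 0\<close> boros_moll_pos assms rec1 rec2 lower upper
    by (intro cleared_quartic_pos_of_recurrence) simp_all
  then show ?thesis unfolding of_nat_add i .
qed

lemma cleared_quartic_boros_moll_norm:
  fixes i k m :: nat
  assumes "1 \<le> i"
  defines "K \<equiv> real (i + k)" and "N \<equiv> \<lambda>j. boros_moll_norm j k m"
  shows "cleared_quartic K (boros_moll (i-1) m) (boros_moll i m) (boros_moll (i+1) m) (boros_moll (i+2) m)
    = fact (i - 1 + k) ^ 4 * K^4 * (K+1)^2 * (K+2)
      * ((N i)^2 * ((N i)^2 - N (i-1) * N (i+1)) - (N (i-1))^2 * ((N (i+1))^2 - N i * N (i+2)))"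
proof -
  define F :: real where "F = fact (i - 1 + k)"
  have "i + k = Suc (i - 1 + k)" using assms(1) by simp
  then have f1: "fact (i + k) = K * F"
    unfolding F_def K_def by (metis fact_Suc of_nat_Suc)
  have f2: "fact (i + 1 + k) = (K + 1) * (K * F)"
    using fact_Suc[of "i + k", where 'a=real] unfolding f1 K_def by simp
  have f3: "fact (i + 2 + k) = (K + 2) * ((K + 1) * (K * F))"
    using fact_Suc[of "i + 1 + k", where 'a=real] unfolding f2 K_def by (simp add: add.commute)
  have "0 < K" "0 < F" unfolding K_def F_def using assms(1) by simp_all
  then have "boros_moll (i-1) m = N (i-1) * F" "boros_moll i m = N i * (K * F)"
    "boros_moll (i+1) m = N (i+1) * ((K + 1) * (K * F))"
    "boros_moll (i+2) m = N (i+2) * ((K + 2) * ((K + 1) * (K * F)))"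
    unfolding N_def boros_moll_norm_def F_def[symmetric] f1 f2 f3 by simp_all
  then show ?thesis
    unfolding cleared_quartic_def F_def[symmetric] by algebra
qed

theorem theorem1p2:
  fixes k m i :: nat
  assumes "m \<ge> 2" and "1 \<le> i" and "i \<le> m - 1"
  shows "(boros_moll_norm i k m)^2 * ((boros_moll_norm i k m)^2
            - boros_moll_norm (i - 1) k m * boros_moll_norm (i + 1) k m)
       > (boros_moll_norm (i - 1) k m)^2 * ((boros_moll_norm (i + 1) k m)^2
            - boros_moll_norm i k m * boros_moll_norm (i + 2) k m)"
proof -
  define K where "K = real (i + k)"
  define D where "D = (boros_moll_norm i k m)^2 * ((boros_moll_norm i k m)^2
      - boros_moll_norm (i - 1) k m * boros_moll_norm (i + 1) k m)
    - (boros_moll_norm (i - 1) k m)^2 * ((boros_moll_norm (i + 1) k m)^2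
      - boros_moll_norm i k m * boros_moll_norm (i + 2) k m)"
  have "cleared_quartic K
      (boros_moll (i-1) m) (boros_moll i m) (boros_moll (i+1) m) (boros_moll (i+2) m)
    = fact (i - 1 + k) ^ 4 * K^4 * (K+1)^2 * (K+2) * D"
    unfolding K_def D_def by (rule cleared_quartic_boros_moll_norm[OF assms(2)])
  moreover have "0 < cleared_quartic K
      (boros_moll (i-1) m) (boros_moll i m) (boros_moll (i+1) m) (boros_moll (i+2) m)"
    unfolding K_def using boros_moll_cleared_quartic_pos assms by simp
  moreover have "0 < fact (i - 1 + k) ^ 4 * K^4 * (K+1)^2 * (K+2)"
    unfolding K_def using assms(2) by simp
  ultimately have "0 < D" by (metis zero_less_mult_pos)
  then show ?thesis unfolding D_def by simp
qed

end
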